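(* Let $A$ be an abelian group, $I$ a finite set, and $(A_i)_{i\in I}$ a family of subgroups of $A$ such that the lattice of subgroups of $A$ generated by the $A_i$ (under the operations $+$ and $\cap$) is distributive. Let $n$ be a positive integer and $(a(i_0,\dots,i_n))_{i_0,\dots,i_n\in I}$ a family of elements of $A$ such that $$\sum_{j=0}^{n+1}(-1)^j\,a(i_0,\dots,\widehat{i_j},\dots,i_{n+1})\equiv 0\pmod{A_{i_0}+\cdots+A_{i_{n+1}}}\quad\text{for all } i_0,\dots,i_{n+1}\in I.$$ Then there exists a family $(x(i_0,\dots,i_{n-1}))_{i_0,\dots,i_{n-1}\in I}$ of elements of $A$ such that $$\sum_{j=0}^{n}(-1)^j\,x(i_0,\dots,\widehat{i_j},\dots,i_n)\equiv a(i_0,\dots,i_n)\pmod{A_{i_0}+\cdots+A_{i_n}}\quad\text{for all } i_0,\dots,i_n\in I.$$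
   Context: A congruence $u\equiv v \pmod{B}$ for a subgroup $B$ of $A$ means $u-v\in B$. A hat $\widehat{i_j}$ means that the entry $i_j$ is omitted. A lattice is distributive if one (equivalently, each) of its two operations distributes over the other. *)

theory Defs
  imports Main
begin

definition subgrp :: "'a::ab_group_add set \<Rightarrow> bool" where
  "subgrp S \<longleftrightarrow> 0 \<in> S \<and> (\<forall>x\<in>S. \<forall>y\<in>S. x - y \<in> S)"

definition sumset :: "'a::ab_group_add set \<Rightarrow> 'a set \<Rightarrow> 'a set" where
  "sumset X Y = {x + y | x y. x \<in> X \<and> y \<in> Y}"

definition subsum :: "('i \<Rightarrow> 'a::ab_group_add set) \<Rightarrow> 'i list \<Rightarrow> 'a set" where
  "subsum Af xs = foldr (\<lambda>i S. sumset (Af i) S) xs {0}"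

inductive_set gen_lattice :: "('i \<Rightarrow> 'a::ab_group_add set) \<Rightarrow> 'i set \<Rightarrow> 'a set set"
  for Af :: "'i \<Rightarrow> 'a set" and I :: "'i set" where
  base: "i \<in> I \<Longrightarrow> Af i \<in> gen_lattice Af I"
| plus: "X \<in> gen_lattice Af I \<Longrightarrow> Y \<in> gen_lattice Af I \<Longrightarrow> sumset X Y \<in> gen_lattice Af I"
| inter: "X \<in> gen_lattice Af I \<Longrightarrow> Y \<in> gen_lattice Af I \<Longrightarrow> X \<inter> Y \<in> gen_lattice Af I"

definition distrib_family :: "'a::ab_group_add set set \<Rightarrow> bool" where
  "distrib_family L \<longleftrightarrow>
     (\<forall>X\<in>L. \<forall>Y\<in>L. \<forall>Z\<in>L. X \<inter> sumset Y Z = sumset (X \<inter> Y) (X \<inter> Z))"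

definition congm :: "'a::ab_group_add \<Rightarrow> 'a \<Rightarrow> 'a set \<Rightarrow> bool" where
  "congm u v B \<longleftrightarrow> u - v \<in> B"

definition omit :: "nat \<Rightarrow> 'i list \<Rightarrow> 'i list" where
  "omit j xs = take j xs @ drop (Suc j) xs"

end

theory Submission
  imports Defs
begin

(* Induction on I. Remove an index k. Coning off with k, i.e. subtracting the coboundary of
   s \<mapsto> a (k # s), leaves a cochain whose value on t lies in A_k + A_t; splitting off its
   A_k-component b leaves something \<equiv> 0 mod A_t. The coboundary of b lies in
   A_k \<inter> A_u, which by distributivity is the sum of the A_i \<inter> A_k over i in u. Hence b is a
   cocycle for the smaller index set I - {k} and the family A_i \<inter> A_k of subgroups of A_k, and
   by induction it has a primitive with values in A_k; such a primitive also works for tuples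
   containing k, because these absorb A_k. *)

definition alt_sign :: "nat \<Rightarrow> 'a::ab_group_add \<Rightarrow> 'a" where
  "alt_sign j v = (if even j then v else - v)"

lemma alt_sign_0 [simp]: "alt_sign 0 v = v"
  by (simp add: alt_sign_def)

lemma alt_sign_Suc: "alt_sign (Suc j) v = - alt_sign j v"
  by (simp add: alt_sign_def)

lemma alt_sign_alt_sign: "alt_sign j (alt_sign l v) = alt_sign (j + l) v"
  by (simp add: alt_sign_def)

lemma alt_sign_add: "alt_sign j (u + v) = alt_sign j u + alt_sign j v"
  by (simp add: alt_sign_def)

lemma alt_sign_diff: "alt_sign j (u - v) = alt_sign j u - alt_sign j v"
  by (simp add: alt_sign_def)

lemma alt_sign_sum: "alt_sign j (sum f A) = (\<Sum>x\<in>A. alt_sign j (f x))"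
  by (simp add: alt_sign_def sum_negf)

lemma omit_0_Cons [simp]: "omit 0 (k # t) = t"
  by (simp add: omit_def)

lemma omit_Suc_Cons [simp]: "omit (Suc j) (k # t) = k # omit j t"
  by (simp add: omit_def)

lemma length_omit: "j < length u \<Longrightarrow> length (omit j u) = length u - 1"
  by (simp add: omit_def)

lemma set_omit_subset: "set (omit j u) \<subseteq> set u"
  unfolding omit_def by (auto dest: in_set_takeD in_set_dropD)

lemma omit_omit: "j \<le> l \<Longrightarrow> omit l (omit j u) = omit j (omit (Suc l) u)"
  unfolding omit_def by (cases "l < length u") (simp_all add: min_def take_drop)

text \<open>The degree m is explicit: ts is meant to have m + 1 entries.\<close>

definition coboundary :: "('i list \<Rightarrow> 'a::ab_group_add) \<Rightarrow> nat \<Rightarrow> 'i list \<Rightarrow> 'a" where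
  "coboundary x m ts = (\<Sum>j\<le>m. alt_sign j (x (omit j ts)))"

lemma coboundary_add: "coboundary (\<lambda>s. x s + y s) m ts = coboundary x m ts + coboundary y m ts"
  by (simp add: coboundary_def alt_sign_add sum.distrib)

lemma coboundary_diff: "coboundary (\<lambda>s. x s - y s) m ts = coboundary x m ts - coboundary y m ts"
  by (simp add: coboundary_def alt_sign_diff sum_subtractf)

lemma coboundary_Cons:
  "coboundary x (Suc m) (k # t) = x t - coboundary (\<lambda>s. x (k # s)) m t"
  unfolding coboundary_def
  by (simp only: sum.atMost_Suc_shift) (simp add: alt_sign_Suc sum_negf del: sum.atMost_Suc)

lemma coboundary_coboundary: "coboundary (\<lambda>s. coboundary x m s) (Suc m) u = 0"
proof -
  let ?f = "\<lambda>(j, l). alt_sign (j + l) (x (omit l (omit j u)))"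
  define S1 where "S1 = {(j, l). j \<le> l \<and> l \<le> m}"
  define S2 where "S2 = {(j, l). l < j \<and> j \<le> Suc m}"
  have "finite S1"
    by (rule finite_subset[of _ "{..m} \<times> {..m}"]) (auto simp: S1_def)
  have "finite S2"
    by (rule finite_subset[of _ "{..Suc m} \<times> {..Suc m}"]) (auto simp: S2_def)
  have "coboundary (\<lambda>s. coboundary x m s) (Suc m) u = sum ?f ({..Suc m} \<times> {..m})"
    by (simp add: coboundary_def alt_sign_sum alt_sign_alt_sign sum.cartesian_product)
  also have "{..Suc m} \<times> {..m} = S1 \<union> S2"
    by (auto simp: S1_def S2_def)
  also have "sum ?f (S1 \<union> S2) = sum ?f S1 + sum ?f S2"
    using \<open>finite S1\<close> \<open>finite S2\<close> by (rule sum.union_disjoint) (auto simp: S1_def S2_def)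
  also have "sum ?f S1 = - sum ?f S2"
    \<comment> \<open>the simplicial identity omit l o omit j = omit j o omit (l + 1) for j \<le> l pairs the terms\<close>
    unfolding sum_negf[symmetric]
    by (rule sum.reindex_bij_witness[where i = "\<lambda>(j, l). (l, j - 1)" and j = "\<lambda>(j, l). (Suc l, j)"])
      (auto simp: S1_def S2_def omit_omit alt_sign_Suc add.commute)
  finally show ?thesis
    by simp
qed

lemma subgrp_0: "subgrp S \<Longrightarrow> 0 \<in> S"
  by (simp add: subgrp_def)

lemma subgrp_diff: "subgrp S \<Longrightarrow> x \<in> S \<Longrightarrow> y \<in> S \<Longrightarrow> x - y \<in> S"
  by (simp add: subgrp_def)

lemma subgrp_uminus: "subgrp S \<Longrightarrow> x \<in> S \<Longrightarrow> - x \<in> S"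
  using subgrp_diff[of S 0 x] by (simp add: subgrp_0)

lemma subgrp_add: "subgrp S \<Longrightarrow> x \<in> S \<Longrightarrow> y \<in> S \<Longrightarrow> x + y \<in> S"
  using subgrp_diff[of S x "- y"] by (simp add: subgrp_uminus)

lemma subgrp_sum: "subgrp S \<Longrightarrow> (\<And>x. x \<in> A \<Longrightarrow> f x \<in> S) \<Longrightarrow> sum f A \<in> S"
  by (induction A rule: infinite_finite_induct) (simp_all add: subgrp_0 subgrp_add)

lemma subgrp_alt_sign: "subgrp S \<Longrightarrow> v \<in> S \<Longrightarrow> alt_sign j v \<in> S"
  by (simp add: alt_sign_def subgrp_uminus)

lemma subgrp_Int: "subgrp X \<Longrightarrow> subgrp Y \<Longrightarrow> subgrp (X \<inter> Y)"
  by (simp add: subgrp_def)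

lemma subgrp_sumset:
  assumes "subgrp X" "subgrp Y"
  shows "subgrp (sumset X Y)"
  unfolding subgrp_def
proof (intro conjI ballI)
  show "0 \<in> sumset X Y"
    using subgrp_0[OF assms(1)] subgrp_0[OF assms(2)] unfolding sumset_def by force
  fix u v assume "u \<in> sumset X Y" "v \<in> sumset X Y"
  then obtain x y x' y' where "u = x + y" "v = x' + y'" "x \<in> X" "x' \<in> X" "y \<in> Y" "y' \<in> Y"
    unfolding sumset_def by blast
  moreover have "(x + y) - (x' + y') = (x - x') + (y - y')"
    by simp
  ultimately show "u - v \<in> sumset X Y"
    using subgrp_diff[OF assms(1)] subgrp_diff[OF assms(2)] unfolding sumset_def by blast
qed

lemma sumset_least: "subgrp Z \<Longrightarrow> X \<subseteq> Z \<Longrightarrow> Y \<subseteq> Z \<Longrightarrow> sumset X Y \<subseteq> Z"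
  unfolding sumset_def using subgrp_add by blast

lemma sumset_upper1: "subgrp Y \<Longrightarrow> X \<subseteq> sumset X Y"
  unfolding sumset_def using subgrp_0 by force

lemma sumset_upper2: "subgrp X \<Longrightarrow> Y \<subseteq> sumset X Y"
  unfolding sumset_def using subgrp_0 by force

lemma sumset_zero [simp]: "sumset X {0} = X"
  unfolding sumset_def by auto

lemma sumset_mono: "X \<subseteq> X' \<Longrightarrow> Y \<subseteq> Y' \<Longrightarrow> sumset X Y \<subseteq> sumset X' Y'"
  unfolding sumset_def by blast

lemma coboundary_mem: "subgrp S \<Longrightarrow> (\<And>j. j \<le> m \<Longrightarrow> x (omit j ts) \<in> S) \<Longrightarrow> coboundary x m ts \<in> S"
  unfolding coboundary_def by (auto intro: subgrp_sum subgrp_alt_sign)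

lemma subsum_Nil [simp]: "subsum Af [] = {0}"
  by (simp add: subsum_def)

lemma subsum_Cons [simp]: "subsum Af (i # xs) = sumset (Af i) (subsum Af xs)"
  by (simp add: subsum_def)

lemma subgrp_subsum: "(\<And>i. i \<in> set xs \<Longrightarrow> subgrp (Af i)) \<Longrightarrow> subgrp (subsum Af xs)"
  by (induction xs) (auto simp: subgrp_def[of "{0}"] subgrp_sumset)

lemma subsum_upper: "(\<And>i. i \<in> set xs \<Longrightarrow> subgrp (Af i)) \<Longrightarrow> i \<in> set xs \<Longrightarrow> Af i \<subseteq> subsum Af xs"
proof (induction xs)
  case (Cons j xs)
  then show ?case
    using sumset_upper1[of "subsum Af xs" "Af j"] sumset_upper2[of "Af j" "subsum Af xs"]
    by (auto simp: subgrp_subsum)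
qed simp

lemma subsum_subset:
  "(\<And>i. i \<in> set ys \<Longrightarrow> subgrp (Af i)) \<Longrightarrow> set xs \<subseteq> set ys \<Longrightarrow> subsum Af xs \<subseteq> subsum Af ys"
  by (induction xs) (simp_all add: sumset_least subgrp_0 subgrp_subsum subsum_upper)

lemma subsum_mono: "(\<And>i. i \<in> set xs \<Longrightarrow> Bf i \<subseteq> Af i) \<Longrightarrow> subsum Bf xs \<subseteq> subsum Af xs"
  by (induction xs) (simp_all add: sumset_mono)

lemma subsum_in_gen_lattice: "xs \<noteq> [] \<Longrightarrow> set xs \<subseteq> I \<Longrightarrow> subsum Af xs \<in> gen_lattice Af I"
  by (induction xs rule: list_nonempty_induct) (simp_all add: gen_lattice.base gen_lattice.plus)

lemma Int_subsum:
  assumes "distrib_family (gen_lattice Af I)" "k \<in> I" "0 \<in> Af k" "set xs \<subseteq> I"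
  shows "Af k \<inter> subsum Af xs = subsum (\<lambda>i. Af i \<inter> Af k) xs"
  using assms(4)
proof (induction xs)
  case (Cons i xs)
  show ?case
  proof (cases "xs = []")
    case False
    then have "Af k \<inter> sumset (Af i) (subsum Af xs) = sumset (Af k \<inter> Af i) (Af k \<inter> subsum Af xs)"
      using assms(1,2) Cons.prems unfolding distrib_family_def
      by (simp add: gen_lattice.base subsum_in_gen_lattice)
    then show ?thesis
      using Cons by (simp add: Int_commute)
  qed (simp add: Int_commute)
qed (use assms(3) in auto)

lemma gen_lattice_Int_subset: "gen_lattice (\<lambda>i. Af i \<inter> Af k) F \<subseteq> gen_lattice Af (insert k F)"
proof
  fix X assume "X \<in> gen_lattice (\<lambda>i. Af i \<inter> Af k) F"
  then show "X \<in> gen_lattice Af (insert k F)"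
    by induction (auto intro: gen_lattice.intros)
qed

lemma distrib_family_subset: "L \<subseteq> M \<Longrightarrow> distrib_family M \<Longrightarrow> distrib_family L"
  unfolding distrib_family_def by blast

text \<open>An n-cochain is a function on tuples with n + 1 entries; only tuples with entries in I
  are tested.\<close>

definition cocycle_on :: "('i \<Rightarrow> 'a::ab_group_add set) \<Rightarrow> 'i set \<Rightarrow> nat \<Rightarrow> ('i list \<Rightarrow> 'a) \<Rightarrow> bool"
  where "cocycle_on Af I n a \<longleftrightarrow>
    (\<forall>u. length u = Suc (Suc n) \<and> set u \<subseteq> I \<longrightarrow> coboundary a (Suc n) u \<in> subsum Af u)"

definition primitive_on ::
  "('i \<Rightarrow> 'a::ab_group_add set) \<Rightarrow> 'i set \<Rightarrow> nat \<Rightarrow> ('i list \<Rightarrow> 'a) \<Rightarrow> ('i list \<Rightarrow> 'a) \<Rightarrow> bool"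
  where "primitive_on Af I n x a \<longleftrightarrow>
    (\<forall>t. length t = Suc n \<and> set t \<subseteq> I \<longrightarrow> a t - coboundary x n t \<in> subsum Af t)"

lemma coboundary_mem_subsum:
  assumes "\<forall>i\<in>I. subgrp (Af i)" "\<And>t. length t = Suc n \<Longrightarrow> set t \<subseteq> I \<Longrightarrow> c t \<in> subsum Af t"
    and "length u = Suc (Suc n)" "set u \<subseteq> I"
  shows "coboundary c (Suc n) u \<in> subsum Af u"
proof (rule coboundary_mem)
  show "subgrp (subsum Af u)"
    using assms(1,4) by (intro subgrp_subsum) blast
  fix j assume "j \<le> Suc n"
  then have "c (omit j u) \<in> subsum Af (omit j u)"
    using assms(3,4) set_omit_subset[of j u] by (intro assms(2)) (auto simp: length_omit)
  also have "subsum Af (omit j u) \<subseteq> subsum Af u"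
    using assms(1,4) by (intro subsum_subset set_omit_subset) blast
  finally show "c (omit j u) \<in> subsum Af u" .
qed

lemma primitive_on_add:
  assumes "\<forall>i\<in>I. subgrp (Af i)" "primitive_on Af I n x a" "primitive_on Af I n y b"
  shows "primitive_on Af I n (\<lambda>s. x s + y s) (\<lambda>t. a t + b t)"
  unfolding primitive_on_def
proof (intro allI impI)
  fix t assume t: "length t = Suc n \<and> set t \<subseteq> I"
  have "a t + b t - coboundary (\<lambda>s. x s + y s) n t
      = (a t - coboundary x n t) + (b t - coboundary y n t)"
    by (simp add: coboundary_add)
  also have "\<dots> \<in> subsum Af t"
    using assms t unfolding primitive_on_def by (intro subgrp_add subgrp_subsum) auto
  finally show "a t + b t - coboundary (\<lambda>s. x s + y s) n t \<in> subsum Af t" .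
qed

lemma primitive_on_insert:
  assumes "\<forall>i\<in>insert k F. subgrp (Af i)" "primitive_on (\<lambda>i. Af i \<inter> Af k) F n y b"
    and "range b \<subseteq> Af k" "range y \<subseteq> Af k"
  shows "primitive_on Af (insert k F) n y b"
  unfolding primitive_on_def
proof (intro allI impI)
  fix t assume t: "length t = Suc n \<and> set t \<subseteq> insert k F"
  show "b t - coboundary y n t \<in> subsum Af t"
  proof (cases "k \<in> set t")
    case True
    have "b t - coboundary y n t \<in> Af k"
      using assms(1,3,4) by (intro subgrp_diff coboundary_mem) auto
    also have "Af k \<subseteq> subsum Af t"
      using assms(1) t True by (intro subsum_upper) blast+
    finally show ?thesis .
  next
    case False
    then have "b t - coboundary y n t \<in> subsum (\<lambda>i. Af i \<inter> Af k) t"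
      using assms(2) t unfolding primitive_on_def by blast
    also have "\<dots> \<subseteq> subsum Af t"
      by (rule subsum_mono) blast
    finally show ?thesis .
  qed
qed

lemma cocycle_on_cohomologous:
  assumes subgroups: "\<forall>i\<in>I. subgrp (Af i)"
    and "cocycle_on Af I n a" "primitive_on Af I n x (\<lambda>t. a t - b t)"
  shows "cocycle_on Af I n b"
  unfolding cocycle_on_def
proof (intro allI impI)
  fix u assume u: "length u = Suc (Suc n) \<and> set u \<subseteq> I"
  define c where "c t = a t - b t - coboundary x n t" for t
  have "coboundary b (Suc n) u = coboundary a (Suc n) u - coboundary c (Suc n) u"
    unfolding c_def coboundary_diff by (simp add: coboundary_coboundary)
  also have "\<dots> \<in> subsum Af u"
  proof (rule subgrp_diff)
    show "subgrp (subsum Af u)"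
      using subgroups u by (intro subgrp_subsum) auto
    show "coboundary a (Suc n) u \<in> subsum Af u"
      using assms(2) u unfolding cocycle_on_def by blast
    have "c t \<in> subsum Af t" if "length t = Suc n" "set t \<subseteq> I" for t
      using assms(3) that unfolding primitive_on_def c_def by blast
    then show "coboundary c (Suc n) u \<in> subsum Af u"
      using subgroups u by (intro coboundary_mem_subsum) auto
  qed
  finally show "coboundary b (Suc n) u \<in> subsum Af u" .
qed

lemma cocycle_on_reduce:
  assumes subgroups: "\<forall>i\<in>insert k F. subgrp (Af i)"
    and distrib: "distrib_family (gen_lattice Af (insert k F))"
    and cocycle: "cocycle_on Af (insert k F) n a"
  obtains b where "range b \<subseteq> Af k"
    and "primitive_on Af (insert k F) n (\<lambda>s. a (k # s)) (\<lambda>t. a t - b t)"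
    and "cocycle_on (\<lambda>i. Af i \<inter> Af k) F n b"
proof -
  let ?I = "insert k F"
  have subgrp_k: "subgrp (Af k)"
    using subgroups by simp
  have "\<exists>c. c \<in> Af k \<and> (length t = Suc n \<and> set t \<subseteq> ?I \<longrightarrow>
      a t - c - coboundary (\<lambda>s. a (k # s)) n t \<in> subsum Af t)" for t
  proof (cases "length t = Suc n \<and> set t \<subseteq> ?I")
    case True
    have "a t - coboundary (\<lambda>s. a (k # s)) n t = coboundary a (Suc n) (k # t)"
      by (simp add: coboundary_Cons)
    also have "\<dots> \<in> subsum Af (k # t)"
      using True by (intro cocycle[unfolded cocycle_on_def, rule_format]) auto
    finally obtain p q where "p \<in> Af k" "q \<in> subsum Af t"
      and "a t - coboundary (\<lambda>s. a (k # s)) n t = p + q"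
      by (auto simp: sumset_def)
    then have "a t - p - coboundary (\<lambda>s. a (k # s)) n t = q"
      by (metis add_diff_cancel_left' diff_right_commute)
    with \<open>p \<in> Af k\<close> \<open>q \<in> subsum Af t\<close> show ?thesis
      by blast
  qed (use subgrp_0[OF subgrp_k] in blast)
  then have "\<exists>b. \<forall>t. b t \<in> Af k \<and> (length t = Suc n \<and> set t \<subseteq> ?I \<longrightarrow>
      a t - b t - coboundary (\<lambda>s. a (k # s)) n t \<in> subsum Af t)"
    by (intro choice allI)
  then obtain b where b_k: "range b \<subseteq> Af k"
    and prim: "primitive_on Af ?I n (\<lambda>s. a (k # s)) (\<lambda>t. a t - b t)"
    unfolding primitive_on_def by blast
  have "cocycle_on (\<lambda>i. Af i \<inter> Af k) F n b"
    unfolding cocycle_on_def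
  proof (intro allI impI)
    fix u assume u: "length u = Suc (Suc n) \<and> set u \<subseteq> F"
    have "coboundary b (Suc n) u \<in> subsum Af u"
      using cocycle_on_cohomologous[OF subgroups cocycle prim] u
      unfolding cocycle_on_def by blast
    moreover have "coboundary b (Suc n) u \<in> Af k"
      using subgrp_k b_k by (intro coboundary_mem) auto
    ultimately show "coboundary b (Suc n) u \<in> subsum (\<lambda>i. Af i \<inter> Af k) u"
      using Int_subsum[OF distrib _ subgrp_0[OF subgrp_k]] u by blast
  qed
  with b_k prim show ?thesis
    using that by blast
qed

lemma cocycle_on_has_primitive:
  assumes "finite I" "subgrp G" "\<forall>i\<in>I. subgrp (Af i) \<and> Af i \<subseteq> G"
    and "distrib_family (gen_lattice Af I)" "range a \<subseteq> G" "cocycle_on Af I n a"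
  shows "\<exists>x. range x \<subseteq> G \<and> primitive_on Af I n x a"
  using assms
proof (induction I arbitrary: Af G a rule: finite_induct)
  case empty
  then show ?case
    by (intro exI[of _ "\<lambda>_. 0"]) (auto simp: subgrp_0 primitive_on_def)
next
  case (insert k F Af G a)
  have subgroups: "\<forall>i\<in>insert k F. subgrp (Af i)"
    using insert.prems(2) by blast
  then have "subgrp (Af k)"
    by simp
  obtain b where b_k: "range b \<subseteq> Af k"
    and prim: "primitive_on Af (insert k F) n (\<lambda>s. a (k # s)) (\<lambda>t. a t - b t)"
    and cocycle_b: "cocycle_on (\<lambda>i. Af i \<inter> Af k) F n b"
    using cocycle_on_reduce[OF subgroups insert.prems(3,5)] .
  have "distrib_family (gen_lattice (\<lambda>i. Af i \<inter> Af k) F)"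
    using gen_lattice_Int_subset insert.prems(3) by (rule distrib_family_subset)
  then obtain y where y_k: "range y \<subseteq> Af k" and "primitive_on (\<lambda>i. Af i \<inter> Af k) F n y b"
    using insert.IH[OF \<open>subgrp (Af k)\<close> _ _ b_k cocycle_b] subgroups
    by (auto simp: subgrp_Int)
  then have "primitive_on Af (insert k F) n y b"
    using subgroups b_k by (intro primitive_on_insert)
  then have "primitive_on Af (insert k F) n (\<lambda>s. a (k # s) + y s) a"
    using primitive_on_add[OF subgroups prim] by fastforce
  moreover have "range (\<lambda>s. a (k # s) + y s) \<subseteq> G"
    using insert.prems(1,2,4) y_k by (auto intro: subgrp_add)
  ultimately show ?case
    by blast
qed

theorem theorem4:
  fixes Af :: "'i \<Rightarrow> 'a::ab_group_add set" and I :: "'i set"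
    and n :: nat and a :: "'i list \<Rightarrow> 'a"
  assumes "finite I"
    and "\<forall>i\<in>I. subgrp (Af i)"
    and "distrib_family (gen_lattice Af I)"
    and "n \<ge> 1"
    and "\<forall>ts. length ts = n + 2 \<and> set ts \<subseteq> I \<longrightarrow>
           congm (\<Sum>j\<le>n+1. (if even j then a (omit j ts) else - a (omit j ts))) 0 (subsum Af ts)"
  shows "\<exists>x :: 'i list \<Rightarrow> 'a. \<forall>ts. length ts = n + 1 \<and> set ts \<subseteq> I \<longrightarrow>
           congm (\<Sum>j\<le>n. (if even j then x (omit j ts) else - x (omit j ts))) (a ts) (subsum Af ts)"
proof -
  have coboundary_eq: "coboundary x m ts = (\<Sum>j\<le>m. (if even j then x (omit j ts) else - x (omit j ts)))"
    for x :: "'i list \<Rightarrow> 'a" and m ts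
    by (simp add: coboundary_def alt_sign_def)
  have "cocycle_on Af I n a"
    using assms(5) by (simp add: cocycle_on_def coboundary_eq congm_def)
  moreover have "subgrp (UNIV :: 'a set)"
    by (simp add: subgrp_def)
  ultimately obtain x where "primitive_on Af I n x a"
    using cocycle_on_has_primitive[OF assms(1) _ _ assms(3)] assms(2) by blast
  then have "coboundary x n ts - a ts \<in> subsum Af ts" if "length ts = n + 1" "set ts \<subseteq> I" for ts
    using that assms(2) subgrp_uminus[OF subgrp_subsum, of ts Af "a ts - coboundary x n ts"]
    unfolding primitive_on_def by auto
  then show ?thesis
    by (auto simp: congm_def coboundary_eq[symmetric])
qed

end
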